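(* For every integer $n\ge3$, the coefficient of the monomial $T_2T_n^2$ in $R_{n+1}$ is $c^{(n+1)}_{n,n,2}=-n(n+1)$.
   Context: Let $T_1,T_2,\dots$ be indeterminates, $T_\alpha=T_{\alpha_1}\cdots T_{\alpha_d}$. Define linear operators $L,H$ on monomials (constants sent to $0$): $L(T_{\alpha_1}\cdots T_{\alpha_r})=\sum_{1\le i<j\le r}T_{\alpha_1}\cdots T_{\alpha_i+1}\cdots T_{\alpha_j+1}\cdots T_{\alpha_r}$, $H(T_{\alpha_1}\cdots T_{\alpha_r})=-\frac12\sum_{k=1}^{r}\sum_{l=1}^{\alpha_k-1}\binom{\alpha_k}{l}T_{1+l}T_{1+\alpha_k-l}\prod_{i\ne k}T_{\alpha_i}$. For $n\ge2$ let $A_n=-\sum_{k=1}^{n-1}\binom{n}{k}T_{1+k}T_{1+n-k}T_n$; set $R_2=0$, $R_{n+1}=A_n+L(R_n)+H(R_n)$. $c^{(n)}_\alpha$ is the coefficient of the monomial $T_\alpha$ in $R_n$. *)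

theory Defs
  imports Complex_Main "HOL-Library.Multiset"
begin

text \<open>A polynomial in the indeterminates T_1, T_2, ... with rational coefficients is
represented as a formal sum: a list of (coefficient, monomial) pairs, where a monomial
T_{a_1}...T_{a_r} is the list [a_1,...,a_r] (order irrelevant).\<close>

type_synonym fpoly = "(rat \<times> nat list) list"

definition pcoeff :: "fpoly \<Rightarrow> nat list \<Rightarrow> rat" where
  "pcoeff P \<alpha> = sum_list (map fst (filter (\<lambda>(c, m). mset m = mset \<alpha>) P))"

definition lin :: "(nat list \<Rightarrow> fpoly) \<Rightarrow> fpoly \<Rightarrow> fpoly" where
  "lin f P = concat (map (\<lambda>(c, m). map (\<lambda>(d, m'). (c * d, m')) (f m)) P)"

definition L_mon :: "nat list \<Rightarrow> fpoly" where
  "L_mon as = [(1, as[i := as ! i + 1, j := as ! j + 1]).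
                 i \<leftarrow> [0..<length as], j \<leftarrow> [Suc i..<length as]]"

definition H_mon :: "nat list \<Rightarrow> fpoly" where
  "H_mon as = [(- (1/2) * of_nat ((as ! k) choose l),
                 (take k as @ drop (Suc k) as) @ [1 + l, 1 + (as ! k) - l]).
                 k \<leftarrow> [0..<length as], l \<leftarrow> [1..<as ! k]]"

definition A_poly :: "nat \<Rightarrow> fpoly" where
  "A_poly n = [(- of_nat (n choose k), [1 + k, 1 + n - k, n]). k \<leftarrow> [1..<n]]"

text \<open>R_2 = 0, R_{n+1} = A_n + L(R_n) + H(R_n) for n >= 2 (R_0, R_1 are unused and set to 0).\<close>
primrec R :: "nat \<Rightarrow> fpoly" where
  "R 0 = []"
| "R (Suc n) = (if n < 2 then [] else A_poly n @ lin L_mon (R n) @ lin H_mon (R n))"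

end

theory Submission
  imports Defs
begin

text \<open>Every monomial of R_n has at least three factors, all of index at least 2.
  Hence H, which adds a factor, never produces the cubic monomial T_2 T_n^2; in A_n it occurs
  for k = 1 and k = n - 1, with total coefficient -2n; and for n \<ge> 4 the only monomial that L
  sends to it is T_2 T_{n-1}^2, exactly once. So c^(n+1)_{n,n,2} = -2n + c^(n)_{n-1,n-1,2}.
  For n = 3 the monomial T_2^3 is sent to T_2 T_3^2 three times, so the induction starts from
  the direct computation c^(4)_{3,3,2} = -12.\<close>

lemma pcoeff_Nil [simp]: "pcoeff [] \<alpha> = 0"
  by (simp add: pcoeff_def)

lemma pcoeff_Cons [simp]:
  "pcoeff ((c, m) # P) \<alpha> = (if mset m = mset \<alpha> then c else 0) + pcoeff P \<alpha>"
  by (simp add: pcoeff_def)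

lemma pcoeff_append [simp]: "pcoeff (P @ Q) \<alpha> = pcoeff P \<alpha> + pcoeff Q \<alpha>"
  by (simp add: pcoeff_def)

lemma pcoeff_map_scale: "pcoeff (map (\<lambda>(d, m). (c * d, m)) P) \<alpha> = c * pcoeff P \<alpha>"
  by (induction P) (auto simp: algebra_simps)

lemma pcoeff_lin: "pcoeff (lin f P) \<alpha> = sum_list (map (\<lambda>(c, m). c * pcoeff (f m) \<alpha>) P)"
  by (induction P) (auto simp: lin_def pcoeff_map_scale)

lemma pcoeff_eq_0_if_lengths_differ:
  assumes "\<And>c m. (c, m) \<in> set P \<Longrightarrow> length m \<noteq> length \<alpha>"
  shows "pcoeff P \<alpha> = 0"
  using assms
proof (induction P)
  case (Cons x P)
  then show ?case by (cases x) (auto dest: mset_eq_length)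
qed simp

lemma pcoeff_lin_eq_pcoeff:
  assumes "\<And>c m. (c, m) \<in> set P \<Longrightarrow> pcoeff (f m) \<alpha> = (if mset m = mset \<beta> then 1 else 0)"
  shows "pcoeff (lin f P) \<alpha> = pcoeff P \<beta>"
  using assms
proof (induction P)
  case (Cons x P)
  obtain c m where x: "x = (c, m)" by fastforce
  have "pcoeff (f m) \<alpha> = (if mset m = mset \<beta> then 1 else 0)"
    by (rule Cons.prems[of c]) (simp add: x)
  moreover have "pcoeff (lin f P) \<alpha> = pcoeff P \<beta>"
    by (rule Cons.IH) (rule Cons.prems, auto)
  moreover have "lin f ((c, m) # P) = map (\<lambda>(d, m'). (c * d, m')) (f m) @ lin f P"
    by (simp add: lin_def)
  ultimately show ?case by (simp add: x pcoeff_map_scale)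
qed (simp add: lin_def)

lemma pcoeff_map_pair:
  "pcoeff (map (\<lambda>k. (f k, g k)) xs) \<alpha> = (\<Sum>k\<leftarrow>xs. if mset (g k) = mset \<alpha> then f k else 0)"
  by (induction xs) auto

lemma in_set_linD: "(c', m') \<in> set (lin f P) \<Longrightarrow> \<exists>c m d. (c, m) \<in> set P \<and> (d, m') \<in> set (f m)"
  by (auto simp: lin_def)

lemma mset_eq_3_iff:
  "mset [x, y, z] = mset [p, q, r] \<longleftrightarrow>
     (x = p \<and> y = q \<and> z = r) \<or> (x = p \<and> y = r \<and> z = q) \<or> (x = q \<and> y = p \<and> z = r) \<or>
     (x = q \<and> y = r \<and> z = p) \<or> (x = r \<and> y = p \<and> z = q) \<or> (x = r \<and> y = q \<and> z = p)"
  by (auto simp: add_eq_conv_ex)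

definition admissible :: "nat list \<Rightarrow> bool" where
  "admissible m \<longleftrightarrow> 3 \<le> length m \<and> (\<forall>x\<in>set m. 2 \<le> x)"

lemma length_L_mon: "(d, m') \<in> set (L_mon m) \<Longrightarrow> length m' = length m"
  by (auto simp: L_mon_def)

lemma admissible_L_mon:
  assumes "(d, m') \<in> set (L_mon m)" and "admissible m"
  shows "admissible m'"
proof -
  obtain i j where ij: "i < j" "j < length m" and m': "m' = m[i := m ! i + 1, j := m ! j + 1]"
    using assms(1) unfolding L_mon_def by (fastforce simp: Suc_le_eq)
  have "set m' \<subseteq> insert (m ! j + 1) (insert (m ! i + 1) (set m))"
    unfolding m' by (meson insert_mono order_trans set_update_subset_insert)
  moreover have "\<forall>x\<in>insert (m ! j + 1) (insert (m ! i + 1) (set m)). 2 \<le> x"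
  proof -
    have "m ! i \<in> set m" "m ! j \<in> set m"
      using ij by auto
    then show ?thesis
      using assms(2) by (auto simp: admissible_def)
  qed
  ultimately show ?thesis
    using assms(2) by (auto simp: admissible_def m')
qed

lemma admissible_H_mon:
  assumes "(d, m') \<in> set (H_mon m)" and "admissible m"
  shows "admissible m' \<and> length m' = length m + 1"
  using assms unfolding admissible_def H_mon_def
  by clarsimp (auto dest: in_set_takeD in_set_dropD)

lemma admissible_R: "(c, m) \<in> set (R n) \<Longrightarrow> admissible m"
proof (induction n arbitrary: c m)
  case (Suc n)
  then consider "(c, m) \<in> set (A_poly n)" "2 \<le> n"
    | "(c, m) \<in> set (lin L_mon (R n))" | "(c, m) \<in> set (lin H_mon (R n))"
    by (auto split: if_splits)
  then show ?case
  proof cases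
    case 1
    then show ?thesis by (auto simp: A_poly_def admissible_def)
  next
    case 2
    then show ?thesis using Suc.IH by (blast dest: in_set_linD admissible_L_mon)
  next
    case 3
    then show ?thesis using Suc.IH by (blast dest: in_set_linD admissible_H_mon)
  qed
qed simp

lemma pcoeff_H_R_cubic: "pcoeff (lin H_mon (R n)) [a, b, c] = 0"
proof (rule pcoeff_eq_0_if_lengths_differ)
  fix d m'
  assume "(d, m') \<in> set (lin H_mon (R n))"
  then obtain e m d' where "(e, m) \<in> set (R n)" "(d', m') \<in> set (H_mon m)"
    by (blast dest: in_set_linD)
  then have "4 \<le> length m'"
    by (auto dest!: admissible_R admissible_H_mon simp: admissible_def)
  then show "length m' \<noteq> length [a, b, c]" by simp
qed

lemma pcoeff_A_poly:
  assumes "3 \<le> n"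
  shows "pcoeff (A_poly n) [n, n, 2] = - 2 * of_nat n"
proof -
  have hit: "mset [1 + k, 1 + n - k, n] = mset [n, n, 2] \<longleftrightarrow> k = 1 \<or> k = n - 1"
    if "k \<in> {1..<n}" for k
    using assms that unfolding mset_eq_3_iff atLeastLessThan_iff by auto
  have "pcoeff (A_poly n) [n, n, 2] =
      (\<Sum>k\<in>{1..<n}. if mset [1 + k, 1 + n - k, n] = mset [n, n, 2] then - of_nat (n choose k) else 0)"
    unfolding A_poly_def pcoeff_map_pair
    by (simp only: sum_list_distinct_conv_sum_set[OF distinct_upt] set_upt)
  also have "\<dots> = (\<Sum>k\<in>{1..<n}. if k = 1 \<or> k = n - 1 then - of_nat (n choose k) else 0)"
    by (intro sum.cong refl) (simp only: hit)
  also have "\<dots> = (\<Sum>k\<in>{1, n - 1}. - of_nat (n choose k))"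
    using assms by (intro sum.mono_neutral_cong_right) auto
  also have "\<dots> = - 2 * of_nat n"
    using assms by (simp add: binomial_symmetric)
  finally show ?thesis .
qed

lemma pcoeff_L_mon_cubic:
  assumes "4 \<le> n" and "admissible m"
  shows "pcoeff (L_mon m) [n, n, 2] = (if mset m = mset [n - 1, n - 1, 2] then 1 else 0)"
proof (cases "length m = 3")
  case False
  then have "mset m \<noteq> mset [n - 1, n - 1, 2]"
    by (metis mset_eq_length length_Cons list.size(3) numeral_3_eq_3)
  moreover have "pcoeff (L_mon m) [n, n, 2] = 0"
    using False by (intro pcoeff_eq_0_if_lengths_differ) (auto dest: length_L_mon)
  ultimately show ?thesis by simp
next
  case True
  then obtain a b c where m: "m = [a, b, c]"
    by (metis (no_types) length_0_conv length_Suc_conv numeral_3_eq_3)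
  have "L_mon m = [(1, [a + 1, b + 1, c]), (1, [a + 1, b, c + 1]), (1, [a, b + 1, c + 1])]"
    by (simp add: m L_mon_def upt_rec)
  moreover have "2 \<le> a" "2 \<le> b" "2 \<le> c"
    using assms(2) by (auto simp: admissible_def m)
  ultimately show ?thesis
    using assms(1) by (simp add: m mset_eq_3_iff del: mset.simps) auto
qed

lemma pcoeff_R_recurrence:
  assumes "4 \<le> n"
  shows "pcoeff (R (n + 1)) [n, n, 2] = - 2 * of_nat n + pcoeff (R n) [n - 1, n - 1, 2]"
proof -
  have "pcoeff (lin L_mon (R n)) [n, n, 2] = pcoeff (R n) [n - 1, n - 1, 2]"
    by (intro pcoeff_lin_eq_pcoeff pcoeff_L_mon_cubic[OF assms]) (rule admissible_R)
  then show ?thesis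
    using assms by (simp add: pcoeff_A_poly pcoeff_H_R_cubic)
qed

lemma pcoeff_R4: "pcoeff (R 4) [3, 3, 2] = -12"
  by (simp add: pcoeff_def lin_def L_mon_def H_mon_def A_poly_def numeral_eq_Suc upt_rec)
    (auto simp: add_eq_conv_ex)

theorem mainTheorem13:
  fixes n :: nat
  assumes "n \<ge> 3"
  shows "pcoeff (R (n + 1)) [n, n, 2] = - of_nat (n * (n + 1))"
  using assms
proof (induction n rule: nat_induct_at_least)
  case base
  show ?case using pcoeff_R4 by simp
next
  case (Suc n)
  then have "pcoeff (R (Suc n + 1)) [Suc n, Suc n, 2] = - 2 * of_nat (Suc n) + pcoeff (R (n + 1)) [n, n, 2]"
    using pcoeff_R_recurrence[of "Suc n"] by simp
  with Suc.IH show ?case by (simp add: algebra_simps)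
qed

end
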